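(* Let $\mathbb{X}\subset\mathbb{R}^n$ be a Lebesgue-measurable compact set and let $f:\mathbb{R}^n\to\mathbb{R}$ be positive homogeneous with $f|_{\mathbb{X}}$ Lebesgue integrable. Then for every $\epsilon>0$ there exists a finite-depth HomoMLP $\mathcal{A}'$ with ReLU activations and width at most $2(n+4)$, representing a function $F_{\mathcal{A}'}:\mathbb{R}^n\to\mathbb{R}$, such that $\int_{\mathbb{X}}|f(x)-F_{\mathcal{A}'}(x)|\,dx<\epsilon$.
   Context: A function $g$ is positive homogeneous iff $g(\lambda x)=\lambda g(x)$ for all $x$ and all $\lambda>0$. A HomoMLP is a multilayer perceptron without bias terms whose activation functions are positive homogeneous, i.e. a function of the form $x\mapsto W_L\,\sigma(W_{L-1}\,\sigma(\cdots\sigma(W_1x)\cdots))$ with weight matrices $W_1,\dots,W_L$ and positive homogeneous activation $\sigma$ applied coordinatewise (here $\sigma=\mathrm{ReLU}$). Its width is the maximal number of rows among $W_1,\dots,W_{L-1}$. *)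

theory Defs
  imports "HOL-Analysis.Analysis"
begin

definition positive_homogeneous :: "('a::real_vector \<Rightarrow> real) \<Rightarrow> bool" where
  "positive_homogeneous g \<longleftrightarrow> (\<forall>x. \<forall>c::real. c > 0 \<longrightarrow> g (c *\<^sub>R x) = c * g x)"

definition relu :: "real \<Rightarrow> real" where
  "relu t = max 0 t"

definition mat_vec :: "real list list \<Rightarrow> real list \<Rightarrow> real list" where
  "mat_vec W v = map (\<lambda>r. sum_list (map2 (*) r v)) W"

fun eval_layers :: "real list list list \<Rightarrow> real list \<Rightarrow> real list" where
  "eval_layers [] h = h"
| "eval_layers (W # Ws) h = eval_layers Ws (mat_vec W (map relu h))"

text \<open>A bias-free ReLU MLP x \<mapsto> W_L relu(W_{L-1} relu(... relu(W_1 x))).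
  W1 is the first weight matrix, given by its rows (vectors in R^n);
  Ws = [W_2, ..., W_L] are the remaining matrices given as lists of rows.\<close>
definition homo_mlp_fun :: "(real^'n) list \<Rightarrow> real list list list \<Rightarrow> real^'n \<Rightarrow> real" where
  "homo_mlp_fun W1 Ws x = hd (eval_layers Ws (map (\<lambda>r. r \<bullet> x) W1))"

definition homo_mlp_wf :: "(real^'n) list \<Rightarrow> real list list list \<Rightarrow> bool" where
  "homo_mlp_wf W1 Ws \<longleftrightarrow>
     (let dims = length W1 # map length Ws in
        last dims = 1 \<and> (\<forall>i<length Ws. \<forall>r\<in>set (Ws ! i). length r = dims ! i))"

definition homo_mlp_width :: "(real^'n) list \<Rightarrow> real list list list \<Rightarrow> nat" where
  "homo_mlp_width W1 Ws = foldr max (butlast (length W1 # map length Ws)) 0"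

end

(*
  The differences max_i p_i . x - max_j q_j . x of two finite maxima of linear functionals form a
  lattice of continuous positively homogeneous functions that is closed under linear combinations
  and interpolates every positively homogeneous function at any two points. By the lattice
  version of the Stone-Weierstrass theorem it therefore approximates a positively homogeneous f
  uniformly on every compact set on which f is continuous. Each such difference is computed by a
  bias-free ReLU network of width 2n + 5: every hidden layer carries the input as (x, -x) together
  with a running maximum stored in three registers.

  To obtain an L1 approximation on X, truncate f at k |x|_1 (dominated convergence), use Lusin's
  theorem to find a compact K in X of almost full measure on which f is continuous, approximate
  f uniformly on K, and truncate the approximant at k |x|_1 as well, so that on X - K the error
  is bounded by 2 k max_X |x|_1.
*)
theory Submission
  imports Defs
begin

section \<open>Differences of maxima of linear functionals\<close>

definition max_inner :: "'a::real_inner list \<Rightarrow> 'a \<Rightarrow> real" where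
  "max_inner P x = Max ((\<lambda>p. p \<bullet> x) ` set P)"

definition max_inner_diff :: "'a::real_inner list \<Rightarrow> 'a list \<Rightarrow> 'a \<Rightarrow> real" where
  "max_inner_diff P Q x = max_inner P x - max_inner Q x"

definition is_max_inner_diff :: "('a::real_inner \<Rightarrow> real) \<Rightarrow> bool" where
  "is_max_inner_diff g \<longleftrightarrow> (\<exists>P Q. P \<noteq> [] \<and> Q \<noteq> [] \<and> g = max_inner_diff P Q)"

lemma max_inner_single [simp]: "max_inner [p] x = p \<bullet> x"
  by (simp add: max_inner_def)

lemma max_inner_Cons:
  "P \<noteq> [] \<Longrightarrow> max_inner (p # P) x = max (p \<bullet> x) (max_inner P x)"
  by (simp add: max_inner_def)

lemma max_inner_Cons_fold: "max_inner (p # P) x = fold max (map (\<lambda>q. q \<bullet> x) P) (p \<bullet> x)"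
  unfolding max_inner_def by (simp only: set_map[symmetric] list.map Max.set_eq_fold)

lemma max_inner_append:
  "P \<noteq> [] \<Longrightarrow> Q \<noteq> [] \<Longrightarrow> max_inner (P @ Q) x = max (max_inner P x) (max_inner Q x)"
  unfolding max_inner_def by (simp add: image_Un Max_Un)

lemma Max_add_image:
  fixes f g :: "_ \<Rightarrow> real"
  assumes "finite A" "A \<noteq> {}" "finite B" "B \<noteq> {}"
  shows "Max {f a + g b | a b. a \<in> A \<and> b \<in> B} = Max (f ` A) + Max (g ` B)"
proof (rule Max_eqI)
  have "{f a + g b | a b. a \<in> A \<and> b \<in> B} = (\<lambda>(a, b). f a + g b) ` (A \<times> B)" by auto
  then show "finite {f a + g b | a b. a \<in> A \<and> b \<in> B}" using assms by simp
  show "y \<le> Max (f ` A) + Max (g ` B)" if "y \<in> {f a + g b | a b. a \<in> A \<and> b \<in> B}" for y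
    using that assms by (auto intro: add_mono)
  have "Max (f ` A) \<in> f ` A" "Max (g ` B) \<in> g ` B" using assms by auto
  then obtain a b where "a \<in> A" "f a = Max (f ` A)" "b \<in> B" "g b = Max (g ` B)"
    by (metis imageE)
  then show "Max (f ` A) + Max (g ` B) \<in> {f a + g b | a b. a \<in> A \<and> b \<in> B}" by force
qed

lemma max_inner_sums:
  assumes "P \<noteq> []" "Q \<noteq> []"
  shows "max_inner [p + q. p \<leftarrow> P, q \<leftarrow> Q] x = max_inner P x + max_inner Q x"
proof -
  have "(\<lambda>p. p \<bullet> x) ` set [p + q. p \<leftarrow> P, q \<leftarrow> Q] = {p \<bullet> x + q \<bullet> x | p q. p \<in> set P \<and> q \<in> set Q}"
    by (force simp: inner_add_left)
  then show ?thesis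
    unfolding max_inner_def using Max_add_image[of "set P" "set Q"] assms by simp
qed

lemma max_inner_scaleR:
  assumes "P \<noteq> []" "c \<ge> 0"
  shows "max_inner (map ((*\<^sub>R) c) P) x = c * max_inner P x"
proof -
  have "(\<lambda>p. p \<bullet> x) ` set (map ((*\<^sub>R) c) P) = (\<lambda>y. c * y) ` ((\<lambda>p. p \<bullet> x) ` set P)"
    by (auto simp: image_image)
  moreover have "Max ((\<lambda>y. c * y) ` ((\<lambda>p. p \<bullet> x) ` set P)) = c * Max ((\<lambda>p. p \<bullet> x) ` set P)"
    by (rule mono_Max_commute[symmetric]) (use assms in \<open>auto simp: mono_def mult_left_mono\<close>)
  ultimately show ?thesis unfolding max_inner_def by simp
qed

lemma continuous_on_max_inner: "P \<noteq> [] \<Longrightarrow> continuous_on UNIV (max_inner P)"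
proof (induction P rule: list_nonempty_induct)
  case (single p)
  show ?case by (simp add: continuous_on_inner continuous_on_id)
next
  case (cons p P)
  have "max_inner (p # P) = (\<lambda>x. max (p \<bullet> x) (max_inner P x))"
    using cons.hyps by (simp add: fun_eq_iff max_inner_Cons)
  then show ?case
    using continuous_on_max[OF continuous_on_inner[OF continuous_on_const continuous_on_id] cons.IH]
    by simp
qed

lemma is_max_inner_diffE:
  assumes "is_max_inner_diff g"
  obtains P Q where "P \<noteq> []" "Q \<noteq> []" "g = max_inner_diff P Q"
  using assms unfolding is_max_inner_diff_def by blast

lemma is_max_inner_diffI:
  "P \<noteq> [] \<Longrightarrow> Q \<noteq> [] \<Longrightarrow> (\<And>x. g x = max_inner P x - max_inner Q x) \<Longrightarrow> is_max_inner_diff g"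
  unfolding is_max_inner_diff_def max_inner_diff_def by blast

lemma continuous_on_max_inner_diff: "is_max_inner_diff g \<Longrightarrow> continuous_on UNIV g"
  by (erule is_max_inner_diffE)
    (simp add: max_inner_diff_def continuous_on_diff continuous_on_max_inner)

lemma is_max_inner_diff_inner: "is_max_inner_diff (\<lambda>x. w \<bullet> x)"
  by (rule is_max_inner_diffI[of "[w]" "[0]"]) auto

lemma is_max_inner_diff_zero: "is_max_inner_diff (\<lambda>x. 0)"
  using is_max_inner_diff_inner[of 0] by simp

lemma is_max_inner_diff_uminus: "is_max_inner_diff g \<Longrightarrow> is_max_inner_diff (\<lambda>x. - g x)"
  by (erule is_max_inner_diffE, erule (1) is_max_inner_diffI) (simp add: max_inner_diff_def)

lemma is_max_inner_diff_add:
  assumes "is_max_inner_diff g" "is_max_inner_diff h"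
  shows "is_max_inner_diff (\<lambda>x. g x + h x)"
proof -
  obtain P Q where g: "P \<noteq> []" "Q \<noteq> []" "g = max_inner_diff P Q"
    using assms(1) by (rule is_max_inner_diffE)
  obtain P' Q' where h: "P' \<noteq> []" "Q' \<noteq> []" "h = max_inner_diff P' Q'"
    using assms(2) by (rule is_max_inner_diffE)
  have "[p + q. p \<leftarrow> P, q \<leftarrow> P'] \<noteq> []" "[p + q. p \<leftarrow> Q, q \<leftarrow> Q'] \<noteq> []"
    using g h by (auto simp: neq_Nil_conv)
  then show ?thesis
    by (rule is_max_inner_diffI) (simp add: g h max_inner_diff_def max_inner_sums)
qed

lemma is_max_inner_diff_scale_nonneg:
  assumes "is_max_inner_diff g" "c \<ge> 0"
  shows "is_max_inner_diff (\<lambda>x. c * g x)"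
proof -
  obtain P Q where g: "P \<noteq> []" "Q \<noteq> []" "g = max_inner_diff P Q"
    using assms(1) by (rule is_max_inner_diffE)
  have "map ((*\<^sub>R) c) P \<noteq> []" "map ((*\<^sub>R) c) Q \<noteq> []"
    using g by auto
  then show ?thesis
    by (rule is_max_inner_diffI)
      (simp add: g assms(2) max_inner_diff_def max_inner_scaleR right_diff_distrib)
qed

lemma is_max_inner_diff_scale:
  assumes "is_max_inner_diff g"
  shows "is_max_inner_diff (\<lambda>x. c * g x)"
proof (cases "c \<ge> 0")
  case False
  then show ?thesis
    using is_max_inner_diff_uminus[OF is_max_inner_diff_scale_nonneg[OF assms, of "- c"]] by simp
qed (rule is_max_inner_diff_scale_nonneg[OF assms])

lemma is_max_inner_diff_max:
  assumes "is_max_inner_diff g" "is_max_inner_diff h"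
  shows "is_max_inner_diff (\<lambda>x. max (g x) (h x))"
proof -
  obtain P Q where g: "P \<noteq> []" "Q \<noteq> []" "g = max_inner_diff P Q"
    using assms(1) by (rule is_max_inner_diffE)
  obtain P' Q' where h: "P' \<noteq> []" "Q' \<noteq> []" "h = max_inner_diff P' Q'"
    using assms(2) by (rule is_max_inner_diffE)
  let ?A = "[p + q. p \<leftarrow> P, q \<leftarrow> Q']" and ?A' = "[p + q. p \<leftarrow> P', q \<leftarrow> Q]"
    and ?B = "[p + q. p \<leftarrow> Q, q \<leftarrow> Q']"
  have ne: "?A \<noteq> []" "?A' \<noteq> []" "?B \<noteq> []"
    using g h by (auto simp: neq_Nil_conv)
  \<comment> \<open>\<open>max (p - q) (p' - q') = max (p + q') (p' + q) - (q + q')\<close>\<close>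
  have "max (g x) (h x) = max_inner (?A @ ?A') x - max_inner ?B x" for x
    using g h ne by (simp add: max_inner_diff_def max_inner_append max_inner_sums max_def)
  then show ?thesis
    using ne by (intro is_max_inner_diffI[of "?A @ ?A'" ?B]) auto
qed

lemma is_max_inner_diff_min:
  assumes "is_max_inner_diff g" "is_max_inner_diff h"
  shows "is_max_inner_diff (\<lambda>x. min (g x) (h x))"
proof -
  have "is_max_inner_diff (\<lambda>x. - max (- g x) (- h x))"
    using assms by (intro is_max_inner_diff_uminus is_max_inner_diff_max)
  moreover have "- max (- g x) (- h x) = min (g x) (h x)" for x
    by (simp add: max_def min_def)
  ultimately show ?thesis by simp
qed

lemma is_max_inner_diff_relu: "is_max_inner_diff (\<lambda>x. relu (w \<bullet> x))"
  unfolding relu_def by (intro is_max_inner_diff_max is_max_inner_diff_zero is_max_inner_diff_inner)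

definition clip :: "real \<Rightarrow> real \<Rightarrow> real" where
  "clip c v = max (- c) (min c v)"

lemma abs_clip_le: "c \<ge> 0 \<Longrightarrow> \<bar>clip c v\<bar> \<le> c"
  by (auto simp: clip_def)

lemma clip_eq_self: "\<bar>v\<bar> \<le> c \<Longrightarrow> clip c v = v"
  by (auto simp: clip_def)

lemma abs_diff_clip_le: "c \<ge> 0 \<Longrightarrow> \<bar>v - clip c v\<bar> \<le> \<bar>v\<bar>"
  by (auto simp: clip_def)

lemma abs_clip_diff_le: "\<bar>clip c v - clip c w\<bar> \<le> \<bar>v - w\<bar>"
  by (auto simp: clip_def)

lemma is_max_inner_diff_clip:
  "is_max_inner_diff \<rho> \<Longrightarrow> is_max_inner_diff g \<Longrightarrow> is_max_inner_diff (\<lambda>x. clip (\<rho> x) (g x))"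
  unfolding clip_def
  by (intro is_max_inner_diff_max is_max_inner_diff_min is_max_inner_diff_uminus)

definition l1_norm :: "real^'n::finite \<Rightarrow> real" where
  "l1_norm x = (\<Sum>i\<in>UNIV. \<bar>x $ i\<bar>)"

lemma l1_norm_nonneg: "l1_norm x \<ge> 0"
  by (simp add: l1_norm_def sum_nonneg)

lemma l1_norm_eq_zero_iff: "l1_norm x = 0 \<longleftrightarrow> x = 0"
  by (simp add: l1_norm_def sum_nonneg_eq_0_iff vec_eq_iff)

lemma is_max_inner_diff_l1_norm: "is_max_inner_diff (l1_norm :: real^'n::finite \<Rightarrow> real)"
proof -
  have "(\<lambda>x :: real^'n. \<bar>x $ i\<bar>) = (\<lambda>x. max (axis i 1 \<bullet> x) ((- axis i 1) \<bullet> x))" for i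
    by (simp add: fun_eq_iff inner_axis' abs_real_def max_def)
  then have coord: "is_max_inner_diff (\<lambda>x :: real^'n. \<bar>x $ i\<bar>)" for i
    by (simp only:) (intro is_max_inner_diff_max is_max_inner_diff_inner)
  have "is_max_inner_diff (\<lambda>x :: real^'n. \<Sum>i\<in>I. \<bar>x $ i\<bar>)" if "finite I" for I
    using that by (induction I rule: finite_induct)
      (simp_all add: coord is_max_inner_diff_zero is_max_inner_diff_add)
  then show ?thesis unfolding l1_norm_def by simp
qed

section \<open>ReLU networks computing differences of maxima\<close>

text \<open>A hidden layer of width \<open>5 + 2n\<close> holds three registers \<open>a, m, t\<close> and the input \<open>x\<close>
  (its coordinates listed by \<open>js\<close>) as \<open>(a, -a, m, -m, t, x, -x)\<close>. After ReLU, \<open>a\<close>, \<open>m\<close> and \<open>x\<close> are recovered as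
  \<open>relu v - relu (-v)\<close>, whereas \<open>t\<close> only survives as \<open>relu t\<close>; so every row of the next
  weight matrix evaluates a linear form in \<open>(a, m, relu t, x)\<close>.\<close>

type_synonym 'n reg_form = "real \<times> real \<times> real \<times> (real^'n)"

definition encode_regs :: "'n::finite list \<Rightarrow> real \<Rightarrow> real \<Rightarrow> real \<Rightarrow> real^'n \<Rightarrow> real list" where
  "encode_regs js a m t x = [a, -a, m, -m, t] @ map (\<lambda>j. x $ j) js @ map (\<lambda>j. - x $ j) js"

definition form_row :: "'n::finite list \<Rightarrow> 'n reg_form \<Rightarrow> real list" where
  "form_row js \<phi> = (case \<phi> of (\<alpha>, \<beta>, \<gamma>, w) \<Rightarrow>
     [\<alpha>, -\<alpha>, \<beta>, -\<beta>, \<gamma>] @ map (\<lambda>j. w $ j) js @ map (\<lambda>j. - w $ j) js)"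

definition eval_form :: "'n::finite reg_form \<Rightarrow> real \<Rightarrow> real \<Rightarrow> real \<Rightarrow> real^'n \<Rightarrow> real" where
  "eval_form \<phi> a m T x = (case \<phi> of (\<alpha>, \<beta>, \<gamma>, w) \<Rightarrow> \<alpha> * a + \<beta> * m + \<gamma> * T + w \<bullet> x)"

definition neg_form :: "'n::finite reg_form \<Rightarrow> 'n reg_form" where
  "neg_form \<phi> = (case \<phi> of (\<alpha>, \<beta>, \<gamma>, w) \<Rightarrow> (-\<alpha>, -\<beta>, -\<gamma>, -w))"

lemma relu_minus_relu_uminus: "relu a - relu (- a) = a"
  by (simp add: relu_def max_def)

lemma eval_form_neg_form [simp]: "eval_form (neg_form \<phi>) a m T x = - eval_form \<phi> a m T x"
  by (cases \<phi>) (auto simp: eval_form_def neg_form_def)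

lemma eval_form_axis [simp]:
  "eval_form (0, 0, 0, axis j 1) a m T x = x $ j"
  "eval_form (0, 0, 0, - axis j 1) a m T x = - x $ j"
  by (auto simp: eval_form_def inner_axis')

lemma form_row_encode_regs:
  assumes "distinct js" "set js = UNIV"
  shows "sum_list (map2 (*) (form_row js \<phi>) (map relu (encode_regs js a m t x)))
           = eval_form \<phi> a m (relu t) x"
proof -
  obtain \<alpha> \<beta> \<gamma> w where \<phi>: "\<phi> = (\<alpha>, \<beta>, \<gamma>, w)" by (cases \<phi>) auto
  have "(\<Sum>j\<leftarrow>js. w $ j * relu (x $ j)) + (\<Sum>j\<leftarrow>js. - w $ j * relu (- x $ j))
          = (\<Sum>j\<leftarrow>js. w $ j * (relu (x $ j) - relu (- x $ j)))"
    by (induction js) (auto simp: algebra_simps)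
  also have "\<dots> = w \<bullet> x"
    using assms by (simp add: relu_minus_relu_uminus sum_list_distinct_conv_sum_set inner_vec_def)
  finally have inner: "(\<Sum>j\<leftarrow>js. w $ j * relu (x $ j)) + (\<Sum>j\<leftarrow>js. - w $ j * relu (- x $ j)) = w \<bullet> x" .
  have "sum_list (map2 (*) (form_row js \<phi>) (map relu (encode_regs js a m t x)))
     = \<alpha> * (relu a - relu (- a)) + \<beta> * (relu m - relu (- m)) + \<gamma> * relu t
       + ((\<Sum>j\<leftarrow>js. w $ j * relu (x $ j)) + (\<Sum>j\<leftarrow>js. - w $ j * relu (- x $ j)))"
    unfolding \<phi> form_row_def encode_regs_def
    by (simp add: zip_map_map zip_same_conv_map o_def algebra_simps sum_list_addf)
  also have "\<dots> = eval_form \<phi> a m (relu t) x"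
    unfolding inner relu_minus_relu_uminus \<phi> eval_form_def by simp
  finally show ?thesis .
qed

type_synonym 'n reg_update = "'n reg_form \<times> 'n reg_form \<times> 'n reg_form"

fun update_layer :: "'n::finite list \<Rightarrow> 'n reg_update \<Rightarrow> real list list" where
  "update_layer js (\<phi>a, \<phi>m, \<phi>t) =
     [form_row js \<phi>a, form_row js (neg_form \<phi>a), form_row js \<phi>m, form_row js (neg_form \<phi>m),
      form_row js \<phi>t]
     @ map (\<lambda>j. form_row js (0, 0, 0, axis j 1)) js @ map (\<lambda>j. form_row js (0, 0, 0, - axis j 1)) js"

fun update_regs :: "real^'n::finite \<Rightarrow> 'n reg_update \<Rightarrow> real \<times> real \<times> real \<Rightarrow> real \<times> real \<times> real" where
  "update_regs x (\<phi>a, \<phi>m, \<phi>t) (a, m, t) =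
     (eval_form \<phi>a a m (relu t) x, eval_form \<phi>m a m (relu t) x, eval_form \<phi>t a m (relu t) x)"

lemma mat_vec_update_layer:
  assumes "distinct js" "set js = UNIV"
  shows "mat_vec (update_layer js U) (map relu (encode_regs js a m t x))
           = (case update_regs x U (a, m, t) of (a', m', t') \<Rightarrow> encode_regs js a' m' t' x)"
proof -
  obtain \<phi>a \<phi>m \<phi>t where U: "U = (\<phi>a, \<phi>m, \<phi>t)" by (cases U) auto
  show ?thesis
    unfolding U mat_vec_def
    by (simp only: update_layer.simps map_append list.map map_map o_def form_row_encode_regs[OF assms])
      (simp add: encode_regs_def o_def)
qed

lemma eval_layers_update_layers:
  assumes "distinct js" "set js = UNIV"
  shows "eval_layers (map (update_layer js) Us @ [[form_row js \<phi>]]) (encode_regs js a m t x)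
           = (case fold (update_regs x) Us (a, m, t) of (a', m', t') \<Rightarrow> [eval_form \<phi> a' m' (relu t') x])"
proof (induction Us arbitrary: a m t)
  case Nil
  then show ?case by (simp add: mat_vec_def form_row_encode_regs[OF assms])
next
  case (Cons U Us)
  obtain a' m' t' where "update_regs x U (a, m, t) = (a', m', t')"
    by (cases "update_regs x U (a, m, t)") auto
  then show ?case using Cons[of a' m' t'] by (simp add: mat_vec_update_layer[OF assms])
qed

text \<open>\<open>running_max_update l\<close> keeps \<open>a\<close> and maintains the invariant that \<open>m + relu t\<close> is the
  maximum seen so far: it sets \<open>m' = m + relu t\<close> and \<open>t' = l \<bullet> x - m'\<close>, and
  \<open>max (l \<bullet> x) m' = m' + relu t'\<close>. \<open>store_max_update q\<close> parks the finished maximum in \<open>a\<close>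
  and restarts with \<open>m = q \<bullet> x, t = 0\<close>; the output row \<open>(1, -1, -1, 0)\<close> returns
  \<open>a - (m + relu t)\<close>.\<close>

definition running_max_update :: "real^'n::finite \<Rightarrow> 'n reg_update" where
  "running_max_update l = ((1, 0, 0, 0), (0, 1, 1, 0), (0, -1, -1, l))"

definition store_max_update :: "real^'n::finite \<Rightarrow> 'n reg_update" where
  "store_max_update q = ((0, 1, 1, 0), (0, 0, 0, q), (0, 0, 0, 0))"

lemma fold_running_max_update:
  assumes "fold (update_regs x) (map running_max_update ls) (a, m, t) = (a', m', t')"
  shows "a' = a \<and> m' + relu t' = fold max (map (\<lambda>l. l \<bullet> x) ls) (m + relu t)"
  using assms
proof (induction ls arbitrary: a m t)
  case (Cons l ls)
  have "update_regs x (running_max_update l) (a, m, t) = (a, m + relu t, l \<bullet> x - (m + relu t))"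
    by (simp add: running_max_update_def eval_form_def)
  moreover have "m + relu t + relu (l \<bullet> x - (m + relu t)) = max (l \<bullet> x) (m + relu t)"
    by (simp add: relu_def max_def)
  ultimately show ?case
    using Cons.IH[of a "m + relu t" "l \<bullet> x - (m + relu t)"] Cons.prems by simp
qed simp

definition input_layer :: "'n::finite list \<Rightarrow> real^'n \<Rightarrow> (real^'n) list" where
  "input_layer js p = [0, 0, p, -p, 0] @ map (\<lambda>j. axis j 1) js @ map (\<lambda>j. - axis j 1) js"

definition max_inner_diff_layers :: "'n::finite list \<Rightarrow> (real^'n) list \<Rightarrow> real^'n \<Rightarrow> (real^'n) list \<Rightarrow> real list list list" where
  "max_inner_diff_layers js ps q qs =
     map (update_layer js) (map running_max_update ps @ [store_max_update q] @ map running_max_update qs)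
     @ [[form_row js (1, -1, -1, 0)]]"

lemma homo_mlp_fun_max_inner_diff_layers:
  assumes js: "distinct js" "set js = UNIV"
  shows "homo_mlp_fun (input_layer js p) (max_inner_diff_layers js ps q qs) x
           = max_inner_diff (p # ps) (q # qs) x"
proof -
  let ?P = "max_inner (p # ps) x" and ?Q = "max_inner (q # qs) x"
  obtain a1 m1 t1 where r1: "fold (update_regs x) (map running_max_update ps) (0, p \<bullet> x, 0) = (a1, m1, t1)"
    by (metis prod_cases3)
  then have h1: "a1 = 0" "m1 + relu t1 = ?P"
    using fold_running_max_update[OF r1] by (auto simp: max_inner_Cons_fold relu_def)
  then have r2: "update_regs x (store_max_update q) (a1, m1, t1) = (?P, q \<bullet> x, 0)"
    by (simp add: store_max_update_def eval_form_def)
  obtain a3 m3 t3 where r3: "fold (update_regs x) (map running_max_update qs) (?P, q \<bullet> x, 0) = (a3, m3, t3)"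
    by (metis prod_cases3)
  then have h3: "a3 = ?P" "m3 + relu t3 = ?Q"
    using fold_running_max_update[OF r3] by (auto simp: max_inner_Cons_fold relu_def)
  have "map (\<lambda>r. r \<bullet> x) (input_layer js p) = encode_regs js 0 (p \<bullet> x) 0 x"
    by (simp add: input_layer_def encode_regs_def inner_axis')
  then have "homo_mlp_fun (input_layer js p) (max_inner_diff_layers js ps q qs) x
     = hd (case fold (update_regs x) (map running_max_update ps @ [store_max_update q] @
                map running_max_update qs) (0, p \<bullet> x, 0) of
           (a', m', t') \<Rightarrow> [eval_form (1, -1, -1, 0) a' m' (relu t') x])"
    unfolding homo_mlp_fun_def max_inner_diff_layers_def eval_layers_update_layers[OF js, symmetric]
    by simp
  also have "\<dots> = eval_form (1, -1, -1, 0) a3 m3 (relu t3) x"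
    using r1 r2 r3 by simp
  also have "\<dots> = max_inner_diff (p # ps) (q # qs) x"
    using h3 by (simp add: eval_form_def max_inner_diff_def algebra_simps)
  finally show ?thesis .
qed

lemma length_form_row [simp]: "length (form_row js \<phi>) = 5 + 2 * length js"
  by (cases \<phi>) (auto simp: form_row_def)

lemma length_update_layer [simp]: "length (update_layer js U) = 5 + 2 * length js"
  by (cases U) auto

lemma length_update_layer_rows: "r \<in> set (update_layer js U) \<Longrightarrow> length r = 5 + 2 * length js"
  by (cases U) auto

lemma funpow_max_zero_le: "(max (L::nat) ^^ k) 0 \<le> L"
  by (induction k) auto

lemma homo_mlp_wf_width_update_layers:
  fixes js :: "'n::finite list" and Us :: "'n reg_update list" and \<phi> :: "'n reg_form"
  defines "Ws \<equiv> map (update_layer js) Us @ [[form_row js \<phi>]]"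
  shows "homo_mlp_wf (input_layer js p) Ws \<and> homo_mlp_width (input_layer js p) Ws \<le> 5 + 2 * length js"
proof -
  let ?L = "5 + 2 * length js"
  have dims: "length (input_layer js p) # map length Ws = replicate (Suc (length Us)) ?L @ [1]"
    by (simp add: Ws_def input_layer_def o_def map_replicate_const)
  have "length r = (replicate (Suc (length Us)) ?L @ [1]) ! i"
    if i: "i < length Ws" and r: "r \<in> set (Ws ! i)" for i r
  proof -
    have "length r = ?L"
    proof (cases "i < length Us")
      case True
      then show ?thesis using r by (auto simp: Ws_def nth_append intro: length_update_layer_rows)
    next
      case False
      then show ?thesis using i r by (simp add: Ws_def nth_append)
    qed
    moreover have "(replicate (Suc (length Us)) ?L @ [1]) ! i = ?L"
      using i by (simp del: replicate_Suc add: Ws_def nth_append)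
    ultimately show ?thesis by simp
  qed
  then have "homo_mlp_wf (input_layer js p) Ws"
    unfolding homo_mlp_wf_def Let_def dims by simp
  moreover have "homo_mlp_width (input_layer js p) Ws \<le> ?L"
    unfolding homo_mlp_width_def dims by (simp del: replicate_Suc add: funpow_max_zero_le)
  ultimately show ?thesis by simp
qed

lemma homo_mlp_max_inner_diff:
  fixes P Q :: "(real^'n::finite) list"
  assumes "P \<noteq> []" "Q \<noteq> []"
  obtains W1 Ws where "homo_mlp_wf W1 Ws" "homo_mlp_width W1 Ws \<le> 2 * CARD('n) + 5"
    "homo_mlp_fun W1 Ws = max_inner_diff P Q"
proof -
  obtain p ps q qs where PQ: "P = p # ps" "Q = q # qs"
    using assms by (meson neq_Nil_conv)
  obtain js :: "'n list" where js: "distinct js" "set js = UNIV"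
    using finite_distinct_list[of "UNIV :: 'n set"] by auto
  then have "length js = CARD('n)"
    using distinct_card by fastforce
  then show ?thesis
    using that homo_mlp_wf_width_update_layers[where js = js and \<phi> = "(1, -1, -1, 0)" and p = p]
      homo_mlp_fun_max_inner_diff_layers[OF js, of p ps q qs] PQ
    unfolding max_inner_diff_layers_def by fastforce
qed

section \<open>Uniform approximation of positively homogeneous functions\<close>

lemma Min_image_closed:
  assumes "finite T" "T \<noteq> {}" "\<And>t. t \<in> T \<Longrightarrow> h t \<in> L"
    and "\<And>g k. g \<in> L \<Longrightarrow> k \<in> L \<Longrightarrow> (\<lambda>x. min (g x) (k x)) \<in> L"
  shows "(\<lambda>x. Min ((\<lambda>t. h t x :: real) ` T)) \<in> L"
  using assms(1-3)
proof (induction T rule: finite_ne_induct)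
  case (insert t T)
  then have "(\<lambda>x. min (h t x) (Min ((\<lambda>t. h t x) ` T))) \<in> L"
    by (intro assms(4)) auto
  then show ?case using insert by simp
qed simp

lemma Max_image_closed:
  assumes "finite T" "T \<noteq> {}" "\<And>t. t \<in> T \<Longrightarrow> h t \<in> L"
    and "\<And>g k. g \<in> L \<Longrightarrow> k \<in> L \<Longrightarrow> (\<lambda>x. max (g x) (k x)) \<in> L"
  shows "(\<lambda>x. Max ((\<lambda>t. h t x :: real) ` T)) \<in> L"
  using assms(1-3)
proof (induction T rule: finite_ne_induct)
  case (insert t T)
  then have "(\<lambda>x. max (h t x) (Max ((\<lambda>t. h t x) ` T))) \<in> L"
    by (intro assms(4)) auto
  then show ?case using insert by simp
qed simp

lemma compact_pointwise_finite_cover: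
  fixes F :: "'a::metric_space \<Rightarrow> real"
  assumes "compact K" "continuous_on K F" "\<And>t. t \<in> K \<Longrightarrow> continuous_on K (h t)"
    and "\<And>t. t \<in> K \<Longrightarrow> h t t < F t + e"
  obtains T where "finite T" "T \<subseteq> K" "\<And>x. x \<in> K \<Longrightarrow> \<exists>t\<in>T. h t x < F x + e"
proof -
  have "\<exists>d>0. \<forall>x\<in>K. dist x t < d \<longrightarrow> h t x < F x + e" if t: "t \<in> K" for t
  proof -
    have "continuous_on K (\<lambda>x. h t x - F x)"
      using assms(2,3) t by (intro continuous_on_diff)
    then obtain d where "d > 0" "\<forall>x\<in>K. dist x t < d \<longrightarrow> dist (h t x - F x) (h t t - F t) < F t + e - h t t"
      using t assms(4)[OF t] unfolding continuous_on_iff by (metis diff_gt_0_iff_gt)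
    then show ?thesis by (auto simp: dist_real_def abs_less_iff intro!: exI[of _ d])
  qed
  then obtain d where d: "\<And>t. t \<in> K \<Longrightarrow> d t > 0 \<and> (\<forall>x\<in>K. dist x t < d t \<longrightarrow> h t x < F x + e)"
    by metis
  have "K \<subseteq> (\<Union>t\<in>K. ball t (d t))"
    using d by force
  then obtain T where T: "T \<subseteq> K" "finite T" "K \<subseteq> (\<Union>t\<in>T. ball t (d t))"
    using compactE_image[OF assms(1), of K "\<lambda>t. ball t (d t)"] by auto
  show ?thesis
  proof (rule that[OF T(2,1)])
    fix x assume "x \<in> K"
    then obtain t where "t \<in> T" "dist x t < d t"
      using T(3) by (auto simp: dist_commute)
    then show "\<exists>t\<in>T. h t x < F x + e"
      using d[of t] T(1) \<open>x \<in> K\<close> by blast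
  qed
qed

lemma lattice_approximation_from_above:
  fixes F :: "'a::metric_space \<Rightarrow> real"
  assumes K: "compact K" and F: "continuous_on K F"
    and L_cont: "\<And>g. g \<in> L \<Longrightarrow> continuous_on K g"
    and L_min: "\<And>g k. g \<in> L \<Longrightarrow> k \<in> L \<Longrightarrow> (\<lambda>x. min (g x) (k x)) \<in> L"
    and L_interp: "\<And>t. t \<in> K \<Longrightarrow> \<exists>h\<in>L. h s = F s \<and> h t = F t"
    and "s \<in> K" "e > 0"
  shows "\<exists>g\<in>L. g s = F s \<and> (\<forall>x\<in>K. g x < F x + e)"
proof -
  obtain h where h: "\<And>t. t \<in> K \<Longrightarrow> h t \<in> L \<and> h t s = F s \<and> h t t = F t"
    using L_interp by metis
  obtain T where T: "finite T" "T \<subseteq> K" "\<And>x. x \<in> K \<Longrightarrow> \<exists>t\<in>T. h t x < F x + e"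
    by (rule compact_pointwise_finite_cover[OF K F, of h e]) (use h L_cont \<open>e > 0\<close> in auto)
  have "T \<noteq> {}" using T(3)[OF \<open>s \<in> K\<close>] by auto
  let ?g = "\<lambda>x. Min ((\<lambda>t. h t x) ` T)"
  have "?g \<in> L"
    using T \<open>T \<noteq> {}\<close> h by (intro Min_image_closed L_min) auto
  moreover have "(\<lambda>t. h t s) ` T = {F s}"
    using T(2) \<open>T \<noteq> {}\<close> h by force
  moreover have "?g x < F x + e" if "x \<in> K" for x
    using T(3)[OF that] T(1) by (meson Min_le finite_imageI image_eqI order.strict_trans1)
  ultimately show ?thesis by (intro bexI[of _ ?g]) auto
qed

lemma lattice_Stone_Weierstrass:
  fixes F :: "'a::metric_space \<Rightarrow> real"
  assumes K: "compact K" and F: "continuous_on K F"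
    and L_cont: "\<And>g. g \<in> L \<Longrightarrow> continuous_on K g"
    and L_max: "\<And>g k. g \<in> L \<Longrightarrow> k \<in> L \<Longrightarrow> (\<lambda>x. max (g x) (k x)) \<in> L"
    and L_min: "\<And>g k. g \<in> L \<Longrightarrow> k \<in> L \<Longrightarrow> (\<lambda>x. min (g x) (k x)) \<in> L"
    and L_interp: "\<And>s t. s \<in> K \<Longrightarrow> t \<in> K \<Longrightarrow> \<exists>h\<in>L. h s = F s \<and> h t = F t"
    and "L \<noteq> {}" and "e > 0"
  shows "\<exists>h\<in>L. \<forall>x\<in>K. \<bar>h x - F x\<bar> < e"
proof (cases "K = {}")
  case False
  obtain g where g: "\<And>s. s \<in> K \<Longrightarrow> g s \<in> L \<and> g s s = F s \<and> (\<forall>x\<in>K. g s x < F x + e)"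
    using lattice_approximation_from_above[OF K F L_cont L_min L_interp _ \<open>e > 0\<close>] by metis
  obtain S where S: "finite S" "S \<subseteq> K" "\<And>x. x \<in> K \<Longrightarrow> \<exists>s\<in>S. - g s x < - F x + e"
    by (rule compact_pointwise_finite_cover[OF K continuous_on_minus[OF F], of "\<lambda>s x. - g s x" e])
      (use g L_cont \<open>e > 0\<close> in \<open>auto intro: continuous_on_minus\<close>)
  have "S \<noteq> {}" using S(3) False by blast
  let ?h = "\<lambda>x. Max ((\<lambda>s. g s x) ` S)"
  have "?h \<in> L"
    using S \<open>S \<noteq> {}\<close> g by (intro Max_image_closed L_max) auto
  moreover have "\<bar>?h x - F x\<bar> < e" if x: "x \<in> K" for x
  proof -
    obtain s where "s \<in> S" "F x - e < g s x" using S(3)[OF x] by force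
    then have lower: "F x - e < ?h x"
      using S(1) by (meson Max_ge finite_imageI image_eqI order.strict_trans2)
    have "?h x \<in> (\<lambda>s. g s x) ` S"
      using S(1) \<open>S \<noteq> {}\<close> by (intro Max_in) auto
    then obtain s' where s': "s' \<in> S" "?h x = g s' x" by blast
    then have "g s' x < F x + e" using g S(2) x by blast
    then have "?h x < F x + e" using s'(2) by simp
    with lower show ?thesis by (simp add: abs_less_iff)
  qed
  ultimately show ?thesis by (intro bexI[of _ ?h]) auto
qed (use \<open>L \<noteq> {}\<close> in auto)

lemma positive_homogeneous_zero: "positive_homogeneous F \<Longrightarrow> F 0 = 0"
  unfolding positive_homogeneous_def by (metis mult_2 scaleR_zero_right zero_less_numeral add_cancel_right_left)

lemma inner_interpolation:
  fixes s t :: "'a::real_inner"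
  assumes "s \<noteq> 0" "\<And>c. t \<noteq> c *\<^sub>R s"
  shows "\<exists>w. w \<bullet> s = a \<and> w \<bullet> t = b"
proof -
  \<comment> \<open>the component of \<open>t\<close> orthogonal to \<open>s\<close>\<close>
  define t' where "t' = t - ((t \<bullet> s) / (s \<bullet> s)) *\<^sub>R s"
  have ss: "s \<bullet> s \<noteq> 0" using assms(1) by simp
  have t's: "t' \<bullet> s = 0" unfolding t'_def using ss by (simp add: inner_diff_left)
  have "t' \<noteq> 0" unfolding t'_def using assms(2) by (metis eq_iff_diff_eq_0)
  then have t't': "t' \<bullet> t' \<noteq> 0" by simp
  have t't: "t' \<bullet> t = t' \<bullet> t'"
    using t's unfolding t'_def by (simp add: inner_diff_right inner_commute)
  define w where "w = (a / (s \<bullet> s)) *\<^sub>R s + ((b - a * (s \<bullet> t) / (s \<bullet> s)) / (t' \<bullet> t')) *\<^sub>R t'"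
  have "w \<bullet> s = a"
    unfolding w_def using ss t's by (simp add: inner_add_left inner_commute[of t' s])
  moreover have "w \<bullet> t = b"
    unfolding w_def using t't t't' by (simp add: inner_add_left)
  ultimately show ?thesis by blast
qed

lemma is_max_inner_diff_line_interpolation:
  fixes F :: "'a::real_inner \<Rightarrow> real"
  assumes F: "positive_homogeneous F"
  shows "\<exists>h. is_max_inner_diff h \<and> (\<forall>c. h (c *\<^sub>R s) = F (c *\<^sub>R s))"
proof (cases "s = 0")
  case True
  then show ?thesis
    using is_max_inner_diff_zero positive_homogeneous_zero[OF F] by auto
next
  case False
  then have ss: "s \<bullet> s > 0" by simp
  have Fh: "F (c *\<^sub>R x) = c * F x" if "c > 0" for c x
    using F that unfolding positive_homogeneous_def by blast
  \<comment> \<open>\<open>F\<close> is linear on each of the two rays spanned by \<open>s\<close> and \<open>- s\<close>\<close>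
  define h where "h x = F s / (s \<bullet> s) * relu (s \<bullet> x) + F (- s) / (s \<bullet> s) * relu ((- s) \<bullet> x)" for x
  have "is_max_inner_diff h"
    unfolding h_def by (intro is_max_inner_diff_add is_max_inner_diff_scale is_max_inner_diff_relu)
  moreover have "h (c *\<^sub>R s) = F (c *\<^sub>R s)" for c
  proof (cases c "0 :: real" rule: linorder_cases)
    case less
    have "c * (s \<bullet> s) < 0" using less ss by (simp add: mult_neg_pos)
    then have "h (c *\<^sub>R s) = (- c) * F (- s)"
      using ss by (simp add: h_def relu_def)
    also have "\<dots> = F (c *\<^sub>R s)"
      using Fh[of "- c" "- s"] less by simp
    finally show ?thesis .
  next
    case equal
    then show ?thesis using positive_homogeneous_zero[OF F] by (simp add: h_def relu_def)
  next
    case greater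
    then show ?thesis using Fh[OF greater] ss by (simp add: h_def relu_def)
  qed
  ultimately show ?thesis by blast
qed

lemma is_max_inner_diff_interpolation:
  fixes F :: "'a::real_inner \<Rightarrow> real"
  assumes F: "positive_homogeneous F"
  shows "\<exists>h. is_max_inner_diff h \<and> h s = F s \<and> h t = F t"
proof -
  have on_line: "\<exists>h. is_max_inner_diff h \<and> h s = F s \<and> h t = F t"
    if "s = a *\<^sub>R u" "t = b *\<^sub>R u" for a b u
    using is_max_inner_diff_line_interpolation[OF F, of u] that by blast
  consider c where "t = c *\<^sub>R s" | c where "s = c *\<^sub>R t" | "s \<noteq> 0" "\<And>c. t \<noteq> c *\<^sub>R s"
    by (metis scaleR_zero_left)
  then show ?thesis
  proof cases
    case 1
    then show ?thesis by (intro on_line[of 1 s]) auto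
  next
    case 2
    then show ?thesis by (intro on_line[of _ t 1]) auto
  next
    case 3
    then obtain w where "w \<bullet> s = F s" "w \<bullet> t = F t"
      using inner_interpolation by blast
    then show ?thesis using is_max_inner_diff_inner[of w] by blast
  qed
qed

lemma is_max_inner_diff_uniform_approximation:
  fixes f :: "'a::real_inner \<Rightarrow> real"
  assumes "compact K" "continuous_on K f" "positive_homogeneous f" "e > 0"
  obtains h where "is_max_inner_diff h" "\<And>x. x \<in> K \<Longrightarrow> \<bar>h x - f x\<bar> < e"
proof -
  have "\<exists>h\<in>Collect is_max_inner_diff. \<forall>x\<in>K. \<bar>h x - f x\<bar> < e"
  proof (rule lattice_Stone_Weierstrass[OF assms(1,2)])
    show "continuous_on K g" if "g \<in> Collect is_max_inner_diff" for g
      using that continuous_on_max_inner_diff continuous_on_subset by blast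
    show "(\<lambda>x. max (g x) (k x)) \<in> Collect is_max_inner_diff"
      if "g \<in> Collect is_max_inner_diff" "k \<in> Collect is_max_inner_diff" for g k
      using that by (simp add: is_max_inner_diff_max)
    show "(\<lambda>x. min (g x) (k x)) \<in> Collect is_max_inner_diff"
      if "g \<in> Collect is_max_inner_diff" "k \<in> Collect is_max_inner_diff" for g k
      using that by (simp add: is_max_inner_diff_min)
    show "\<exists>h\<in>Collect is_max_inner_diff. h s = f s \<and> h t = f t" for s t
      using is_max_inner_diff_interpolation[OF assms(3)] by blast
  qed (use is_max_inner_diff_zero assms(4) in auto)
  then show ?thesis using that by blast
qed

section \<open>Egorov and Lusin\<close>

lemma sets_deviation:
  fixes f :: "nat \<Rightarrow> 'a \<Rightarrow> real" and g :: "'a \<Rightarrow> real"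
  assumes "\<And>n. f n \<in> borel_measurable M" "g \<in> borel_measurable M" "X \<in> sets M"
  shows "{x \<in> X. \<exists>j\<ge>k. r \<le> \<bar>f j x - g x\<bar>} \<in> sets M"
proof -
  have "{x \<in> space M. r \<le> \<bar>f j x - g x\<bar>} \<in> sets M" for j
    using assms(1,2) by measurable
  then have "(\<Union>j\<in>{k..}. {x \<in> space M. r \<le> \<bar>f j x - g x\<bar>}) \<in> sets M"
    by blast
  moreover have "{x \<in> X. \<exists>j\<ge>k. r \<le> \<bar>f j x - g x\<bar>}
      = X \<inter> (\<Union>j\<in>{k..}. {x \<in> space M. r \<le> \<bar>f j x - g x\<bar>})"
    using sets.sets_into_space[OF assms(3)] by blast
  ultimately show ?thesis using assms(3) by auto
qed

lemma emeasure_deviation_small: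
  fixes f :: "nat \<Rightarrow> 'a \<Rightarrow> real" and g :: "'a \<Rightarrow> real"
  assumes f: "\<And>n. f n \<in> borel_measurable M" and g: "g \<in> borel_measurable M"
    and X: "X \<in> sets M" "emeasure M X < \<infinity>"
    and lim: "\<And>x. x \<in> X \<Longrightarrow> (\<lambda>n. f n x) \<longlonglongrightarrow> g x"
    and "r > 0" "e > 0"
  shows "\<exists>k. emeasure M {x \<in> X. \<exists>j\<ge>k. r \<le> \<bar>f j x - g x\<bar>} < e"
proof -
  define E where "E k = {x \<in> X. \<exists>j\<ge>k. r \<le> \<bar>f j x - g x\<bar>}" for k
  have E: "E k \<in> sets M" for k
    unfolding E_def using f g X(1) by (rule sets_deviation)
  have "emeasure M (E k) \<noteq> \<infinity>" for k
  proof -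
    have "emeasure M (E k) \<le> emeasure M X"
      by (rule emeasure_mono[OF _ X(1)]) (auto simp: E_def)
    then show ?thesis using X(2) by (auto simp: top_unique)
  qed
  moreover have "decseq E"
    unfolding decseq_def E_def by (blast intro: le_trans)
  moreover have "(\<Inter>k. E k) = {}"
  proof (rule equals0I)
    fix x assume x: "x \<in> (\<Inter>k. E k)"
    then have "x \<in> X" by (auto simp: E_def)
    then obtain k where "\<forall>j\<ge>k. \<bar>f j x - g x\<bar> < r"
      using lim \<open>r > 0\<close> unfolding lim_sequentially dist_real_def by blast
    then have "x \<notin> E k" unfolding E_def by (auto simp: not_le)
    with x show False by blast
  qed
  ultimately have "(\<lambda>k. emeasure M (E k)) \<longlonglongrightarrow> 0"
    using Lim_emeasure_decseq[of E M] E by auto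
  then have "\<forall>\<^sub>F k in sequentially. emeasure M (E k) < e"
    using \<open>e > 0\<close> by (rule order_tendstoD)
  then show ?thesis
    unfolding E_def eventually_sequentially by blast
qed

lemma Egorov:
  fixes f :: "nat \<Rightarrow> 'a \<Rightarrow> real" and g :: "'a \<Rightarrow> real"
  assumes f: "\<And>n. f n \<in> borel_measurable M" and g: "g \<in> borel_measurable M"
    and X: "X \<in> sets M" "emeasure M X < \<infinity>"
    and lim: "\<And>x. x \<in> X \<Longrightarrow> (\<lambda>n. f n x) \<longlonglongrightarrow> g x"
    and "\<delta> > 0"
  obtains G where "G \<in> sets M" "G \<subseteq> X" "emeasure M (X - G) \<le> ennreal \<delta>"
    "uniform_limit G f g sequentially"
proof -
  define D where "D m k = {x \<in> X. \<exists>j\<ge>k. 1 / real (Suc m) \<le> \<bar>f j x - g x\<bar>}" for m k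
  have "\<exists>k. emeasure M (D m k) < ennreal (\<delta> * (1 / 2) ^ Suc m)" for m
    unfolding D_def using \<open>\<delta> > 0\<close> by (intro emeasure_deviation_small[OF f g X lim]) auto
  then obtain k where k: "\<And>m. emeasure M (D m (k m)) < ennreal (\<delta> * (1 / 2) ^ Suc m)"
    by metis
  define B where "B = (\<Union>m. D m (k m))"
  have D: "D m k \<in> sets M" for m k
    unfolding D_def using f g X(1) by (rule sets_deviation)
  have "emeasure M B \<le> (\<Sum>m. emeasure M (D m (k m)))"
    unfolding B_def using D by (intro emeasure_subadditive_countably) auto
  also have "\<dots> \<le> (\<Sum>m. ennreal (\<delta> * (1 / 2) ^ Suc m))"
    using k by (intro suminf_le) (auto intro: less_imp_le)
  also have "\<dots> = ennreal (\<delta> * 1)"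
    using \<open>\<delta> > 0\<close> by (intro suminf_ennreal_eq sums_mult power_half_series) auto
  finally have "emeasure M B \<le> ennreal \<delta>" by simp
  moreover have "B \<subseteq> X" by (auto simp: B_def D_def)
  moreover have "uniform_limit (X - B) f g sequentially"
    unfolding uniform_limit_iff
  proof (intro allI impI)
    fix e :: real assume "e > 0"
    then obtain m where m: "1 / real (Suc m) < e"
      by (metis inverse_eq_divide reals_Archimedean)
    have "dist (f j x) (g x) < e" if "j \<ge> k m" "x \<in> X - B" for j x
    proof -
      have "x \<notin> D m (k m)" using that(2) by (auto simp: B_def)
      then have "\<bar>f j x - g x\<bar> < 1 / real (Suc m)"
        using that unfolding D_def by auto
      then show ?thesis using m by (simp add: dist_real_def)
    qed
    then show "\<forall>\<^sub>F j in sequentially. \<forall>x\<in>X - B. dist (f j x) (g x) < e"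
      unfolding eventually_sequentially by blast
  qed
  moreover have "X - B \<in> sets M"
    unfolding B_def using X(1) D by auto
  ultimately show ?thesis
    using that[of "X - B"] by (simp add: Diff_Diff_Int Int_absorb1)
qed

lemma continuous_imp_measurable_lebesgue:
  "continuous_on UNIV (g :: 'a::euclidean_space \<Rightarrow> real) \<Longrightarrow> g \<in> borel_measurable lebesgue"
  by (simp add: borel_measurable_continuous_onI measurable_completion)

lemma Egorov_closed_lebesgue:
  fixes g :: "nat \<Rightarrow> 'a::euclidean_space \<Rightarrow> real"
  assumes g: "\<And>n. g n \<in> borel_measurable lebesgue" and u: "u \<in> borel_measurable lebesgue"
    and X: "X \<in> sets lebesgue" "emeasure lebesgue X < \<infinity>" and N: "N \<in> null_sets lebesgue"
    and lim: "\<And>x. x \<in> X - N \<Longrightarrow> (\<lambda>n. g n x) \<longlonglongrightarrow> u x" and "\<delta> > 0"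
  obtains T where "closed T" "T \<subseteq> X" "emeasure lebesgue (X - T) < ennreal \<delta>"
    "uniform_limit T g u sequentially"
proof -
  have XN: "X - N \<in> sets lebesgue"
    using X(1) N by auto
  have "emeasure lebesgue (X - N) \<le> emeasure lebesgue X"
    by (rule emeasure_mono[OF _ X(1)]) auto
  then have XN_fin: "emeasure lebesgue (X - N) < \<infinity>"
    using X(2) by (rule le_less_trans)
  have "\<delta> / 2 > 0" using \<open>\<delta> > 0\<close> by simp
  obtain G where G: "G \<in> sets lebesgue" "G \<subseteq> X - N"
    "emeasure lebesgue (X - N - G) \<le> ennreal (\<delta> / 2)" "uniform_limit G g u sequentially"
    by (rule Egorov[where f = g, OF g u XN XN_fin lim \<open>\<delta> / 2 > 0\<close>])
  obtain T where T: "closed T" "T \<subseteq> G" "G - T \<in> lmeasurable"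
    "emeasure lebesgue (G - T) < ennreal (\<delta> / 2)"
    by (rule sets_lebesgue_inner_closed[OF G(1) \<open>\<delta> / 2 > 0\<close>])
  have sets: "X - N - G \<in> sets lebesgue" "G - T \<in> sets lebesgue"
    using XN G(1) T(3) by auto
  have "X - T \<subseteq> ((X - N - G) \<union> (G - T)) \<union> N" by auto
  then have "emeasure lebesgue (X - T) \<le> emeasure lebesgue (((X - N - G) \<union> (G - T)) \<union> N)"
    using sets N by (intro emeasure_mono) auto
  also have "\<dots> = emeasure lebesgue ((X - N - G) \<union> (G - T))"
    using sets N by (intro emeasure_Un_null_set) auto
  also have "\<dots> \<le> emeasure lebesgue (X - N - G) + emeasure lebesgue (G - T)"
    using sets by (rule emeasure_subadditive)
  also have "\<dots> \<le> ennreal (\<delta> / 2) + emeasure lebesgue (G - T)"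
    using G(3) by (rule add_right_mono)
  also have "\<dots> < ennreal (\<delta> / 2) + ennreal (\<delta> / 2)"
    using T(4) by (simp add: ennreal_add_left_cancel_less)
  also have "\<dots> = ennreal \<delta>"
    using \<open>\<delta> > 0\<close> by (simp flip: ennreal_plus)
  finally show ?thesis
    using that[OF T(1)] uniform_limit_on_subset[OF G(4) T(2)] T(2) G(2) by blast
qed

lemma Lusin:
  fixes u :: "'a::euclidean_space \<Rightarrow> real"
  assumes u: "u \<in> borel_measurable lebesgue"
    and X: "X \<in> sets lebesgue" "emeasure lebesgue X < \<infinity>" and "\<delta> > 0"
  obtains K where "closed K" "K \<subseteq> X" "emeasure lebesgue (X - K) < ennreal \<delta>" "continuous_on K u"
proof -
  obtain N g where "negligible N" and g: "\<And>n. continuous_on UNIV (g n)"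
    and lim: "\<And>x. x \<notin> N \<Longrightarrow> (\<lambda>n. g n x) \<longlonglongrightarrow> u x"
    using lebesgue_measurable_imp_measurable_on_real[OF u sets.top]
    unfolding measurable_on_def by auto
  then have "N \<in> null_sets lebesgue"
    using negligible_iff_null_sets by blast
  moreover have "g n \<in> borel_measurable lebesgue" for n
    using g by (rule continuous_imp_measurable_lebesgue)
  ultimately obtain T where T: "closed T" "T \<subseteq> X" "emeasure lebesgue (X - T) < ennreal \<delta>"
    "uniform_limit T g u sequentially"
    using Egorov_closed_lebesgue[OF _ u X, of g N \<delta>] lim \<open>\<delta> > 0\<close> by blast
  have "\<forall>\<^sub>F n in sequentially. continuous_on T (g n)"
    using g by (intro always_eventually allI continuous_on_subset[OF g]) simp
  then have "continuous_on T u"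
    using T(4) trivial_limit_sequentially by (rule uniform_limit_theorem)
  then show ?thesis
    using that T(1-3) by blast
qed

section \<open>L1 approximation\<close>

lemma abs_diff_clip_tendsto_zero:
  assumes "c \<ge> 0" "v \<noteq> 0 \<Longrightarrow> c > 0"
  shows "(\<lambda>k. \<bar>v - clip (real k * c) v\<bar>) \<longlonglongrightarrow> 0"
proof (cases "v = 0")
  case True
  then show ?thesis using assms(1) by (simp add: clip_def)
next
  case False
  then have "c > 0" by (rule assms(2))
  obtain N :: nat where "\<bar>v\<bar> / c \<le> N"
    using real_arch_simple by blast
  then have N: "\<bar>v\<bar> \<le> real N * c"
    using \<open>c > 0\<close> by (simp add: divide_le_eq)
  have "\<bar>v - clip (real k * c) v\<bar> = 0" if "k \<ge> N" for k
  proof -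
    have "real N * c \<le> real k * c"
      using that \<open>c > 0\<close> by (simp add: mult_right_mono)
    then show ?thesis
      using N by (simp add: clip_eq_self)
  qed
  then show ?thesis
    by (intro tendsto_eventually) (auto simp: eventually_sequentially)
qed

lemma integral_abs_diff_clip_less:
  fixes u \<rho> :: "'a \<Rightarrow> real"
  assumes u: "integrable M u" and \<rho>: "\<rho> \<in> borel_measurable M" "\<And>x. \<rho> x \<ge> 0"
    and pos: "\<And>x. u x \<noteq> 0 \<Longrightarrow> \<rho> x > 0" and "e > 0"
  obtains k :: nat where "integrable M (\<lambda>x. \<bar>u x - clip (k * \<rho> x) (u x)\<bar>)"
    "(\<integral>x. \<bar>u x - clip (k * \<rho> x) (u x)\<bar> \<partial>M) < e"
proof -
  define s where "s k x = \<bar>u x - clip (real k * \<rho> x) (u x)\<bar>" for k x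
  have s_meas: "s k \<in> borel_measurable M" for k
    unfolding s_def clip_def using u \<rho>(1) by measurable
  have lim: "(\<lambda>k. s k x) \<longlonglongrightarrow> 0" for x
    unfolding s_def using \<rho>(2) pos by (rule abs_diff_clip_tendsto_zero)
  have s_bound: "norm (s k x) \<le> \<bar>u x\<bar>" for k x
    unfolding s_def using abs_diff_clip_le[of "real k * \<rho> x" "u x"] \<rho>(2) by simp
  note dominated = borel_measurable_const s_meas integrable_abs[OF u] AE_I2[OF lim] AE_I2[OF s_bound]
  have "(\<lambda>k. \<integral>x. s k x \<partial>M) \<longlonglongrightarrow> (\<integral>x. 0 \<partial>M)"
    by (rule integral_dominated_convergence[OF dominated])
  then have "\<forall>\<^sub>F k in sequentially. (\<integral>x. s k x \<partial>M) < e"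
    using \<open>e > 0\<close> by (intro order_tendstoD) auto
  then obtain k where "(\<integral>x. s k x \<partial>M) < e"
    by (auto simp: eventually_sequentially)
  moreover have "integrable M (s k)"
    by (rule integrable_dominated_convergence2[OF dominated])
  ultimately show ?thesis
    using that[of k] unfolding s_def by blast
qed

lemma set_integral_abs_diff_clip_less:
  fixes f \<rho> :: "'a \<Rightarrow> real"
  assumes f: "set_integrable M X f" and \<rho>: "\<rho> \<in> borel_measurable M" "\<And>x. \<rho> x \<ge> 0"
    and pos: "\<And>x. x \<in> X \<Longrightarrow> f x \<noteq> 0 \<Longrightarrow> \<rho> x > 0" and "e > 0"
  obtains k :: nat where "set_integrable M X (\<lambda>x. \<bar>f x - clip (k * \<rho> x) (f x)\<bar>)"
    "(LINT x:X|M. \<bar>f x - clip (k * \<rho> x) (f x)\<bar>) < e"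
proof -
  define u where "u x = indicator X x * f x" for x
  have "integrable M u"
    using f unfolding set_integrable_def u_def by simp
  moreover have "\<rho> x > 0" if "u x \<noteq> 0" for x
    using that pos by (auto simp: u_def indicator_def split: if_splits)
  ultimately obtain k :: nat where "integrable M (\<lambda>x. \<bar>u x - clip (k * \<rho> x) (u x)\<bar>)"
    "(\<integral>x. \<bar>u x - clip (k * \<rho> x) (u x)\<bar> \<partial>M) < e"
    using integral_abs_diff_clip_less[OF _ \<rho>] \<open>e > 0\<close> by blast
  moreover have "(\<lambda>x. indicator X x *\<^sub>R \<bar>f x - clip (k * \<rho> x) (f x)\<bar>)
      = (\<lambda>x. \<bar>u x - clip (k * \<rho> x) (u x)\<bar>)" for k :: nat
    using \<rho>(2) by (auto simp: fun_eq_iff u_def indicator_def clip_def)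
  ultimately show ?thesis
    using that unfolding set_integrable_def set_lebesgue_integral_def by metis
qed

lemma abs_diff_clip_le_diff: "\<bar>v - clip c w\<bar> \<le> \<bar>v - clip c v\<bar> + \<bar>v - w\<bar>"
  using abs_clip_diff_le[of c v w] by linarith

lemma abs_diff_clip_le_bound: "c \<ge> 0 \<Longrightarrow> \<bar>v - clip c w\<bar> \<le> \<bar>v - clip c v\<bar> + 2 * c"
  using abs_clip_le[of c v] abs_clip_le[of c w] by linarith

lemma integral_abs_le_split:
  fixes \<phi> r :: "'a \<Rightarrow> real"
  assumes \<phi>: "\<phi> \<in> borel_measurable M" and r: "integrable M r"
    and X: "X \<in> sets M" "emeasure M X < \<infinity>" and K: "K \<in> sets M" "K \<subseteq> X"
    and outside: "\<And>x. x \<notin> X \<Longrightarrow> \<bar>\<phi> x\<bar> \<le> r x"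
    and on_X: "\<And>x. x \<in> X \<Longrightarrow> \<bar>\<phi> x\<bar> \<le> r x + b"
    and on_K: "\<And>x. x \<in> K \<Longrightarrow> \<bar>\<phi> x\<bar> \<le> r x + a"
  shows "integrable M \<phi>"
    and "(\<integral>x. \<bar>\<phi> x\<bar> \<partial>M) \<le> (\<integral>x. r x \<partial>M) + a * measure M K + b * measure M (X - K)"
proof -
  define \<psi> where "\<psi> x = r x + a * indicator K x + b * indicator (X - K) x" for x
  have fin: "emeasure M K < \<infinity>" "emeasure M (X - K) < \<infinity>"
    using X K emeasure_mono[of K X M] emeasure_mono[of "X - K" X M] by (auto intro: le_less_trans)
  have \<psi>: "integrable M \<psi>"
    unfolding \<psi>_def using r X K fin by (intro Bochner_Integration.integrable_add) auto
  have bound: "\<bar>\<phi> x\<bar> \<le> \<psi> x" for x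
    using outside[of x] on_X[of x] on_K[of x] \<open>K \<subseteq> X\<close> by (auto simp: \<psi>_def indicator_def)
  show int: "integrable M \<phi>"
    using bound by (intro Bochner_Integration.integrable_bound[OF \<psi> \<phi>] AE_I2)
      (metis abs_ge_self order_trans real_norm_def)
  have "(\<integral>x. \<bar>\<phi> x\<bar> \<partial>M) \<le> (\<integral>x. \<psi> x \<partial>M)"
    using int \<psi> bound by (intro integral_mono) auto
  also have "\<dots> = (\<integral>x. r x \<partial>M) + a * measure M K + b * measure M (X - K)"
    unfolding \<psi>_def using r X K fin by (simp add: Bochner_Integration.integral_add)
  finally show "(\<integral>x. \<bar>\<phi> x\<bar> \<partial>M) \<le> (\<integral>x. r x \<partial>M) + a * measure M K + b * measure M (X - K)" .
qed

lemma set_integral_abs_diff_clip_le: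
  fixes f g \<rho> :: "'a \<Rightarrow> real"
  assumes X: "X \<in> sets M" "emeasure M X < \<infinity>" and K: "K \<in> sets M" "K \<subseteq> X"
    and meas: "set_borel_measurable M X (\<lambda>x. f x - clip (\<rho> x) (g x))"
    and trunc: "set_integrable M X (\<lambda>x. \<bar>f x - clip (\<rho> x) (f x)\<bar>)"
    and \<rho>: "\<And>x. x \<in> X \<Longrightarrow> 0 \<le> \<rho> x \<and> \<rho> x \<le> c"
    and close: "\<And>x. x \<in> K \<Longrightarrow> \<bar>g x - f x\<bar> \<le> \<eta>" and "\<eta> \<ge> 0"
  shows "set_integrable M X (\<lambda>x. \<bar>f x - clip (\<rho> x) (g x)\<bar>)"
    and "(LINT x:X|M. \<bar>f x - clip (\<rho> x) (g x)\<bar>)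
           \<le> (LINT x:X|M. \<bar>f x - clip (\<rho> x) (f x)\<bar>) + \<eta> * measure M X + 2 * c * measure M (X - K)"
proof -
  define \<phi> where "\<phi> x = indicator X x * (f x - clip (\<rho> x) (g x))" for x
  define r where "r x = indicator X x * \<bar>f x - clip (\<rho> x) (f x)\<bar>" for x
  have "\<bar>\<phi> x\<bar> \<le> r x + 2 * c" if "x \<in> X" for x
    using that \<rho>[OF that] abs_diff_clip_le_bound[of "\<rho> x" "f x" "g x"] by (simp add: \<phi>_def r_def)
  moreover have "\<bar>\<phi> x\<bar> \<le> r x + \<eta>" if "x \<in> K" for x
    using that K(2) close[OF that] abs_diff_clip_le_diff[of "f x" "\<rho> x" "g x"]
    by (auto simp: \<phi>_def r_def abs_minus_commute)
  moreover have "\<bar>\<phi> x\<bar> \<le> r x" if "x \<notin> X" for x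
    using that by (simp add: \<phi>_def r_def)
  moreover have "\<phi> \<in> borel_measurable M" "integrable M r"
    using meas trunc unfolding set_borel_measurable_def set_integrable_def \<phi>_def r_def by simp_all
  ultimately have "integrable M \<phi>"
    and bound: "(\<integral>x. \<bar>\<phi> x\<bar> \<partial>M) \<le> (\<integral>x. r x \<partial>M) + \<eta> * measure M K + 2 * c * measure M (X - K)"
    using integral_abs_le_split[OF _ _ X K] by blast+
  moreover have "(\<lambda>x. indicator X x *\<^sub>R \<bar>f x - clip (\<rho> x) (g x)\<bar>) = (\<lambda>x. \<bar>\<phi> x\<bar>)"
    by (auto simp: \<phi>_def indicator_def)
  ultimately show "set_integrable M X (\<lambda>x. \<bar>f x - clip (\<rho> x) (g x)\<bar>)"
    unfolding set_integrable_def by simp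
  have "measure M K \<le> measure M X"
    using K X by (intro measure_mono_fmeasurable) (auto intro: fmeasurableI)
  then have "\<eta> * measure M K \<le> \<eta> * measure M X"
    using \<open>\<eta> \<ge> 0\<close> by (rule mult_left_mono)
  with bound show "(LINT x:X|M. \<bar>f x - clip (\<rho> x) (g x)\<bar>)
      \<le> (LINT x:X|M. \<bar>f x - clip (\<rho> x) (f x)\<bar>) + \<eta> * measure M X + 2 * c * measure M (X - K)"
    unfolding set_lebesgue_integral_def \<open>(\<lambda>x. indicator X x *\<^sub>R \<bar>f x - clip (\<rho> x) (g x)\<bar>) = _\<close>
    by (simp add: r_def)
qed

lemma positive_homogeneous_approximation_off_small_set:
  fixes f :: "'a::euclidean_space \<Rightarrow> real"
  assumes X: "X \<in> sets lebesgue" "compact X" and hom: "positive_homogeneous f"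
    and f: "(\<lambda>x. indicator X x * f x) \<in> borel_measurable lebesgue" and "\<delta> > 0" "\<eta> > 0"
  obtains K h where "K \<in> sets lebesgue" "K \<subseteq> X" "measure lebesgue (X - K) < \<delta>"
    "is_max_inner_diff h" "\<And>x. x \<in> K \<Longrightarrow> \<bar>h x - f x\<bar> < \<eta>"
proof -
  have X_fin: "emeasure lebesgue X < \<infinity>"
    using fmeasurableD2[OF lmeasurable_compact[OF X(2)]] by (simp add: less_top)
  obtain K where K: "closed K" "K \<subseteq> X" "emeasure lebesgue (X - K) < ennreal \<delta>"
    and cont: "continuous_on K (\<lambda>x. indicator X x * f x)"
    by (rule Lusin[OF f X(1) X_fin \<open>\<delta> > 0\<close>])
  have "compact K"
    using compact_Int_closed[OF X(2) K(1)] K(2) by (simp add: Int_absorb1)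
  moreover have "continuous_on K f"
    using cont by (rule continuous_on_cong[THEN iffD1, rotated 2]) (use K(2) in auto)
  ultimately obtain h where "is_max_inner_diff h" "\<And>x. x \<in> K \<Longrightarrow> \<bar>h x - f x\<bar> < \<eta>"
    using is_max_inner_diff_uniform_approximation hom \<open>\<eta> > 0\<close> by blast
  moreover have "K \<in> sets lebesgue"
    using K(1) by (simp add: borel_closed)
  moreover have "measure lebesgue (X - K) < \<delta>"
    using K(3) \<open>\<delta> > 0\<close> emeasure_eq_ennreal_measure[of lebesgue "X - K"]
    by (metis ennreal_less_iff less_le not_less top.extremum_strict)
  ultimately show ?thesis
    using that K(2) by blast
qed

lemma positive_homogeneous_clipped_approximation:
  fixes f :: "real^'n::finite \<Rightarrow> real"
  assumes X: "X \<in> sets lebesgue" "compact X" and hom: "positive_homogeneous f"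
    and f: "set_integrable lebesgue X f"
    and trunc: "set_integrable lebesgue X (\<lambda>x. \<bar>f x - clip (k * l1_norm x) (f x)\<bar>)"
    and k: "k \<ge> 0" "\<And>x. x \<in> X \<Longrightarrow> k * l1_norm x \<le> c" and "c \<ge> 0" "\<delta> > 0" "\<eta> > 0"
  obtains h where "is_max_inner_diff h" "set_integrable lebesgue X (\<lambda>x. \<bar>f x - h x\<bar>)"
    "(LINT x:X|lebesgue. \<bar>f x - h x\<bar>)
       \<le> (LINT x:X|lebesgue. \<bar>f x - clip (k * l1_norm x) (f x)\<bar>) + \<eta> * measure lebesgue X + 2 * c * \<delta>"
proof -
  have f_meas: "(\<lambda>x. indicator X x * f x) \<in> borel_measurable lebesgue"
    using f unfolding set_integrable_def by simp
  then obtain K h0 where K: "K \<in> sets lebesgue" "K \<subseteq> X" "measure lebesgue (X - K) < \<delta>"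
    and h0: "is_max_inner_diff h0" "\<And>x. x \<in> K \<Longrightarrow> \<bar>h0 x - f x\<bar> < \<eta>"
    using positive_homogeneous_approximation_off_small_set[OF X hom _ \<open>\<delta> > 0\<close> \<open>\<eta> > 0\<close>] by blast
  define h where "h x = clip (k * l1_norm x) (h0 x)" for x
  have h: "is_max_inner_diff h"
    unfolding h_def by (intro is_max_inner_diff_clip is_max_inner_diff_scale is_max_inner_diff_l1_norm h0(1))
  have "(\<lambda>x. indicator X x *\<^sub>R (f x - h x)) = (\<lambda>x. indicator X x * f x - indicator X x * h x)"
    by (auto simp: indicator_def)
  then have "set_borel_measurable lebesgue X (\<lambda>x. f x - h x)"
    unfolding set_borel_measurable_def
    using f_meas X(1) continuous_imp_measurable_lebesgue[OF continuous_on_max_inner_diff[OF h]] by simp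
  moreover have "0 \<le> k * l1_norm x \<and> k * l1_norm x \<le> c" if "x \<in> X" for x
    using k(1) k(2)[OF that] l1_norm_nonneg[of x] by simp
  moreover have "emeasure lebesgue X < \<infinity>"
    using fmeasurableD2[OF lmeasurable_compact[OF X(2)]] by (simp add: less_top)
  ultimately have error: "set_integrable lebesgue X (\<lambda>x. \<bar>f x - h x\<bar>)"
    "(LINT x:X|lebesgue. \<bar>f x - h x\<bar>)
       \<le> (LINT x:X|lebesgue. \<bar>f x - clip (k * l1_norm x) (f x)\<bar>) + \<eta> * measure lebesgue X
          + 2 * c * measure lebesgue (X - K)"
    using set_integral_abs_diff_clip_le[OF X(1) _ K(1,2) _ trunc, of "h0" c \<eta>] h0(2) \<open>\<eta> > 0\<close>
    unfolding h_def by (auto intro: less_imp_le)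
  have "2 * c * measure lebesgue (X - K) \<le> 2 * c * \<delta>"
    using K(3) \<open>c \<ge> 0\<close> by (intro mult_left_mono) auto
  then show ?thesis
    using that[OF h error(1)] error(2) by linarith
qed

lemma positive_homogeneous_L1_approximation:
  fixes f :: "real^'n::finite \<Rightarrow> real"
  assumes X: "X \<in> sets lebesgue" "compact X" and hom: "positive_homogeneous f"
    and f: "set_integrable lebesgue X f" and "\<epsilon> > 0"
  obtains h where "is_max_inner_diff h" "set_integrable lebesgue X (\<lambda>x. \<bar>f x - h x\<bar>)"
    "(LINT x:X|lebesgue. \<bar>f x - h x\<bar>) < \<epsilon>"
proof -
  have l1_cont: "continuous_on UNIV (l1_norm :: real^'n \<Rightarrow> real)"
    by (rule continuous_on_max_inner_diff[OF is_max_inner_diff_l1_norm])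
  have "l1_norm x > 0" if "f x \<noteq> 0" for x
    using that positive_homogeneous_zero[OF hom] l1_norm_nonneg[of x] l1_norm_eq_zero_iff[of x]
    by (cases "x = 0") auto
  moreover have "\<epsilon> / 3 > 0" using \<open>\<epsilon> > 0\<close> by simp
  ultimately obtain k :: nat where
    trunc: "set_integrable lebesgue X (\<lambda>x. \<bar>f x - clip (k * l1_norm x) (f x)\<bar>)"
      "(LINT x:X|lebesgue. \<bar>f x - clip (k * l1_norm x) (f x)\<bar>) < \<epsilon> / 3"
    using set_integral_abs_diff_clip_less[OF f continuous_imp_measurable_lebesgue[OF l1_cont]
        l1_norm_nonneg] by blast
  obtain B where "\<forall>y\<in>l1_norm ` X. \<bar>y\<bar> \<le> B"
    using compact_imp_bounded[OF compact_continuous_image[OF continuous_on_subset[OF l1_cont] X(2)]]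
    unfolding bounded_real by blast
  then have B: "l1_norm x \<le> max B 0" if "x \<in> X" for x
    using that by (meson abs_le_D1 image_eqI max.coboundedI1)
  define c \<delta> \<eta> where "c = k * max B 0" and "\<delta> = \<epsilon> / (3 * (2 * c + 1))"
    and "\<eta> = \<epsilon> / (3 * (measure lebesgue X + 1))"
  have c: "k * l1_norm x \<le> c" if "x \<in> X" for x
    using B[OF that] by (simp add: c_def mult_left_mono)
  have "c \<ge> 0" "\<delta> > 0" "\<eta> > 0"
    using \<open>\<epsilon> > 0\<close> by (simp_all add: c_def \<delta>_def \<eta>_def add_nonneg_pos)
  then obtain h where h: "is_max_inner_diff h" "set_integrable lebesgue X (\<lambda>x. \<bar>f x - h x\<bar>)"
    "(LINT x:X|lebesgue. \<bar>f x - h x\<bar>)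
       \<le> (LINT x:X|lebesgue. \<bar>f x - clip (k * l1_norm x) (f x)\<bar>) + \<eta> * measure lebesgue X + 2 * c * \<delta>"
    using positive_homogeneous_clipped_approximation[OF X hom f trunc(1) of_nat_0_le_iff c] by blast
  have "\<eta> * measure lebesgue X \<le> \<eta> * (measure lebesgue X + 1)"
    using \<open>\<eta> > 0\<close> by simp
  also have "\<dots> = \<epsilon> / 3"
    using add_nonneg_pos[OF measure_nonneg zero_less_one, of lebesgue X]
    unfolding \<eta>_def by (simp add: field_simps)
  finally have "\<eta> * measure lebesgue X \<le> \<epsilon> / 3" .
  moreover have "2 * c * \<delta> \<le> \<epsilon> / 3"
    using \<open>c \<ge> 0\<close> \<open>\<epsilon> > 0\<close> by (simp add: \<delta>_def field_simps)
  ultimately show ?thesis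
    using that[OF h(1,2)] h(3) trunc(2) by linarith
qed

theorem theorem2:
  fixes X :: "(real^'n) set" and f :: "real^'n \<Rightarrow> real" and \<epsilon> :: real
  assumes "X \<in> sets lebesgue" and "compact X"
    and "positive_homogeneous f"
    and "set_integrable lebesgue X f"
    and "\<epsilon> > 0"
  shows "\<exists>W1 Ws. homo_mlp_wf W1 Ws \<and> homo_mlp_width W1 Ws \<le> 2 * (CARD('n) + 4) \<and>
           set_integrable lebesgue X (\<lambda>x. \<bar>f x - homo_mlp_fun W1 Ws x\<bar>) \<and>
           (LINT x:X|lebesgue. \<bar>f x - homo_mlp_fun W1 Ws x\<bar>) < \<epsilon>"
proof -
  obtain h where h: "is_max_inner_diff h" "set_integrable lebesgue X (\<lambda>x. \<bar>f x - h x\<bar>)"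
    "(LINT x:X|lebesgue. \<bar>f x - h x\<bar>) < \<epsilon>"
    using positive_homogeneous_L1_approximation assms by blast
  obtain P Q where "P \<noteq> []" "Q \<noteq> []" "h = max_inner_diff P Q"
    using h(1) by (rule is_max_inner_diffE)
  then obtain W1 Ws where "homo_mlp_wf W1 Ws" "homo_mlp_width W1 Ws \<le> 2 * CARD('n) + 5"
    "homo_mlp_fun W1 Ws = h"
    using homo_mlp_max_inner_diff by metis
  then show ?thesis
    using h(2,3) by (intro exI[of _ W1] exI[of _ Ws]) auto
qed

end
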